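(* Let $\mathcal{A}=\{1,\dots,K\}$, let $a^*\in\mathcal{A}$, $T\ge1$, $\sigma>0$, and for each $a\in\mathcal{A}$ let $m_a\ge1$ be an integer and $\vec{y}_a\in\mathbb{R}^{m_a}$. For perturbations $\vec{\epsilon}_a\in\mathbb{R}^{m_a}$ put $\tilde{\mu}_a=(\vec{y}_a+\vec{\epsilon}_a)^T\mathbf{1}/m_a$ and $$u_a(T+1)=\tilde{\mu}_a+3\sigma\sqrt{\frac{\log(T+1)}{m_a}}.$$ Fix a margin $\xi>0$ and consider $$P_2:\quad \min_{\{\vec{\epsilon}_a\}_{a\in\mathcal{A}}}\ \sum_{a\in\mathcal{A}}\|\vec{\epsilon}_a\|_2^2\quad\text{s.t.}\quad u_{a^*}(T+1)\geq u_a(T+1)+\xi\ \ \forall a\neq a^*.$$ Then $P_2$ is a quadratic program with linear constraints and, for every reward instance $\{\vec{y}_a\}_{a\in\mathcal{A}}$, it has at least one optimal solution. In particular, after poisoning with such a solution, the UCB algorithm pulls $a^*$ at round $T+1$.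
   Context: Offline attack setting: a bandit algorithm pulls arms $a_1,\dots,a_T$, receiving rewards $r_t=\mu_{a_t}+\eta_t$ with zero-mean $\sigma$-subGaussian noise; $m_a$ is the number of rounds $t\le T$ with $a_t=a$, $\vec{y}_a=(r_t:a_t=a)^T$, and an attacker replaces arm $a$'s rewards by $\vec{y}_a+\vec{\epsilon}_a$ before the algorithm updates. $\mathbf{1}$ is the all-ones vector. The UCB algorithm at round $t$ pulls $\arg\max_a \tilde{\mu}_a(t-1)+3\sigma\sqrt{\log t/N_a(t-1)}$, where $\tilde{\mu}_a(t-1)$ is the (poisoned) empirical mean and $N_a(t-1)$ the number of pulls of arm $a$ up to round $t-1$. *)

theory Defs
  imports Complex_Main
begin

text \<open>Arms are 1..K. Arm a has m a observed rewards y a i (i < m a);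
 a perturbation eps assigns eps a i to the i-th reward of arm a (only i < m a matters).\<close>

definition poisoned_mean :: "(nat \<Rightarrow> nat) \<Rightarrow> (nat \<Rightarrow> nat \<Rightarrow> real) \<Rightarrow> (nat \<Rightarrow> nat \<Rightarrow> real) \<Rightarrow> nat \<Rightarrow> real" where
  "poisoned_mean m y eps a = (\<Sum>i<m a. y a i + eps a i) / real (m a)"

definition ucb_index :: "real \<Rightarrow> nat \<Rightarrow> (nat \<Rightarrow> nat) \<Rightarrow> (nat \<Rightarrow> nat \<Rightarrow> real) \<Rightarrow> (nat \<Rightarrow> nat \<Rightarrow> real) \<Rightarrow> nat \<Rightarrow> real" where
  "ucb_index \<sigma> T m y eps a =
     poisoned_mean m y eps a + 3 * \<sigma> * sqrt (ln (real T + 1) / real (m a))"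

definition attack_cost :: "nat \<Rightarrow> (nat \<Rightarrow> nat) \<Rightarrow> (nat \<Rightarrow> nat \<Rightarrow> real) \<Rightarrow> real" where
  "attack_cost K m eps = (\<Sum>a\<in>{1..K}. \<Sum>i<m a. (eps a i)\<^sup>2)"

definition P2_feasible :: "nat \<Rightarrow> nat \<Rightarrow> real \<Rightarrow> nat \<Rightarrow> real \<Rightarrow> (nat \<Rightarrow> nat) \<Rightarrow> (nat \<Rightarrow> nat \<Rightarrow> real) \<Rightarrow> (nat \<Rightarrow> nat \<Rightarrow> real) \<Rightarrow> bool" where
  "P2_feasible K astar \<sigma> T \<xi> m y eps \<longleftrightarrow>
     (\<forall>a\<in>{1..K}. a \<noteq> astar \<longrightarrow> ucb_index \<sigma> T m y eps astar \<ge> ucb_index \<sigma> T m y eps a + \<xi>)"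

definition P2_optimal :: "nat \<Rightarrow> nat \<Rightarrow> real \<Rightarrow> nat \<Rightarrow> real \<Rightarrow> (nat \<Rightarrow> nat) \<Rightarrow> (nat \<Rightarrow> nat \<Rightarrow> real) \<Rightarrow> (nat \<Rightarrow> nat \<Rightarrow> real) \<Rightarrow> bool" where
  "P2_optimal K astar \<sigma> T \<xi> m y eps \<longleftrightarrow>
     P2_feasible K astar \<sigma> T \<xi> m y eps \<and>
     (\<forall>eps'. P2_feasible K astar \<sigma> T \<xi> m y eps' \<longrightarrow> attack_cost K m eps \<le> attack_cost K m eps')"

text \<open>UCB at round T+1 pulls arm a iff a is an argmax of the indices (tie-breaking
 arbitrary); we state that a* is the unique maximiser, so it is pulled under any tie rule.\<close>
definition ucb_pulls :: "nat \<Rightarrow> real \<Rightarrow> nat \<Rightarrow> (nat \<Rightarrow> nat) \<Rightarrow> (nat \<Rightarrow> nat \<Rightarrow> real) \<Rightarrow> (nat \<Rightarrow> nat \<Rightarrow> real) \<Rightarrow> nat \<Rightarrow> bool" where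
  "ucb_pulls K \<sigma> T m y eps a \<longleftrightarrow>
     {b\<in>{1..K}. \<forall>c\<in>{1..K}. ucb_index \<sigma> T m y eps c \<le> ucb_index \<sigma> T m y eps b} = {a}"

end

theory Submission
  imports Defs
begin

text \<open>Only the mean shift of each arm's perturbation enters the UCB index, so by the
  Cauchy-Schwarz bound the cheapest perturbation with prescribed mean shifts is constant on
  each arm. The constraints then say that the shift t of arm a* exceeds the shift of every
  other arm a by a fixed gap, so the best choice for a is the shift -max 0 (gap a - t), and
  P2 collapses to minimizing a continuous one-variable function of t. That function is
  decreasing for t < 0 and increasing beyond every gap, so it attains its minimum on a
  compact interval.\<close>

definition mean_shift :: "(nat \<Rightarrow> nat) \<Rightarrow> (nat \<Rightarrow> nat \<Rightarrow> real) \<Rightarrow> nat \<Rightarrow> real" where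
  "mean_shift m eps a = (\<Sum>i<m a. eps a i) / real (m a)"

definition P2_gap :: "real \<Rightarrow> nat \<Rightarrow> real \<Rightarrow> (nat \<Rightarrow> nat) \<Rightarrow> (nat \<Rightarrow> nat \<Rightarrow> real) \<Rightarrow> nat \<Rightarrow> nat \<Rightarrow> real" where
  "P2_gap \<sigma> T \<xi> m y astar a =
     ucb_index \<sigma> T m y (\<lambda>_ _. 0) a + \<xi> - ucb_index \<sigma> T m y (\<lambda>_ _. 0) astar"

definition hinge_cost :: "real \<Rightarrow> ('a \<Rightarrow> real) \<Rightarrow> ('a \<Rightarrow> real) \<Rightarrow> 'a set \<Rightarrow> real \<Rightarrow> real" where
  "hinge_cost w0 w b A t = w0 * t\<^sup>2 + (\<Sum>a\<in>A. w a * (max 0 (b a - t))\<^sup>2)"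

lemma sum_squares_ge_card_mean_square:
  fixes x :: "nat \<Rightarrow> real"
  shows "real n * ((\<Sum>i<n. x i) / real n)\<^sup>2 \<le> (\<Sum>i<n. (x i)\<^sup>2)"
proof (cases "n = 0")
  case False
  define \<mu> where "\<mu> = (\<Sum>i<n. x i) / real n"
  have "0 \<le> (\<Sum>i<n. (x i - \<mu>)\<^sup>2)"
    by (simp add: sum_nonneg)
  also have "\<dots> = (\<Sum>i<n. (x i)\<^sup>2) - 2 * \<mu> * (\<Sum>i<n. x i) + real n * \<mu>\<^sup>2"
    by (simp add: power2_diff sum.distrib sum_subtractf sum_distrib_left mult_ac)
  also have "2 * \<mu> * (\<Sum>i<n. x i) = 2 * (real n * \<mu>\<^sup>2)"
    using False by (simp add: \<mu>_def power2_eq_square)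
  finally show ?thesis
    by (simp add: \<mu>_def)
qed simp

lemma hinge_cost_ge_at_zero:
  assumes "w0 \<ge> 0" and "\<forall>a\<in>A. w a \<ge> 0" and "t \<le> 0"
  shows "hinge_cost w0 w b A 0 \<le> hinge_cost w0 w b A t"
proof -
  have "(max 0 (b a - 0))\<^sup>2 \<le> (max 0 (b a - t))\<^sup>2" for a
    using assms(3) by (intro power_mono) auto
  then show ?thesis
    unfolding hinge_cost_def using assms(1,2)
    by (intro add_mono sum_mono mult_left_mono) auto
qed

lemma hinge_cost_ge_at_bound:
  assumes "w0 \<ge> 0" and "\<forall>a\<in>A. b a \<le> B" and "0 \<le> B" and "B \<le> t"
  shows "hinge_cost w0 w b A B \<le> hinge_cost w0 w b A t"
proof -
  have "(\<Sum>a\<in>A. w a * (max 0 (b a - t))\<^sup>2) = (\<Sum>a\<in>A. w a * (max 0 (b a - B))\<^sup>2)"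
    using assms(2,4) by (intro sum.cong) auto
  moreover have "B\<^sup>2 \<le> t\<^sup>2"
    using assms(3,4) by (intro power_mono) auto
  ultimately show ?thesis
    unfolding hinge_cost_def using assms(1) by (simp add: mult_left_mono)
qed

lemma hinge_cost_attains_min:
  assumes "finite A" and "w0 \<ge> 0" and "\<forall>a\<in>A. w a \<ge> 0"
  obtains t0 where "\<And>t. hinge_cost w0 w b A t0 \<le> hinge_cost w0 w b A t"
proof -
  define B where "B = (\<Sum>a\<in>A. \<bar>b a\<bar>)"
  have "0 \<le> B"
    unfolding B_def by (simp add: sum_nonneg)
  have b_le: "\<forall>a\<in>A. b a \<le> B"
    using member_le_sum[of _ A "\<lambda>a. \<bar>b a\<bar>"] assms(1) unfolding B_def by force
  have cont: "continuous_on {0..B} (hinge_cost w0 w b A)"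
    unfolding hinge_cost_def by (intro continuous_intros)
  obtain t0 where t0: "t0 \<in> {0..B}" "\<forall>t\<in>{0..B}. hinge_cost w0 w b A t0 \<le> hinge_cost w0 w b A t"
    using continuous_attains_inf[OF compact_Icc _ cont] \<open>0 \<le> B\<close> by auto
  have "hinge_cost w0 w b A t0 \<le> hinge_cost w0 w b A t" for t
  proof -
    consider "t < 0" | "t \<in> {0..B}" | "B < t"
      by fastforce
    then show ?thesis
    proof cases
      case 1
      have "hinge_cost w0 w b A 0 \<le> hinge_cost w0 w b A t"
        using 1 assms(2,3) by (intro hinge_cost_ge_at_zero) auto
      moreover have "hinge_cost w0 w b A t0 \<le> hinge_cost w0 w b A 0"
        using t0(2) \<open>0 \<le> B\<close> by simp
      ultimately show ?thesis
        by linarith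
    next
      case 3
      have "hinge_cost w0 w b A B \<le> hinge_cost w0 w b A t"
        using 3 assms(2) b_le \<open>0 \<le> B\<close> by (intro hinge_cost_ge_at_bound) auto
      moreover have "hinge_cost w0 w b A t0 \<le> hinge_cost w0 w b A B"
        using t0(2) \<open>0 \<le> B\<close> by simp
      ultimately show ?thesis
        by linarith
    qed (use t0 in blast)
  qed
  then show ?thesis
    using that by blast
qed

lemma ucb_index_eq_unpoisoned_plus_mean_shift:
  "ucb_index \<sigma> T m y eps a = ucb_index \<sigma> T m y (\<lambda>_ _. 0) a + mean_shift m eps a"
  unfolding ucb_index_def poisoned_mean_def mean_shift_def
  by (simp add: sum.distrib add_divide_distrib)

lemma P2_feasible_iff_gap:
  "P2_feasible K astar \<sigma> T \<xi> m y eps \<longleftrightarrow>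
     (\<forall>a\<in>{1..K} - {astar}. P2_gap \<sigma> T \<xi> m y astar a \<le> mean_shift m eps astar - mean_shift m eps a)"
  unfolding P2_feasible_def P2_gap_def ucb_index_eq_unpoisoned_plus_mean_shift[of _ _ _ _ eps]
  by (smt (verit) DiffD1 DiffD2 DiffI singletonD singletonI)

lemma sum_split_arm:
  fixes K astar :: nat
  assumes "astar \<in> {1..K}"
  shows "(\<Sum>a\<in>{1..K}. f a) = f astar + (\<Sum>a\<in>{1..K} - {astar}. f a)"
  using assms by (intro sum.remove) auto

lemma attack_cost_ge_mean_shift:
  "(\<Sum>a\<in>{1..K}. real (m a) * (mean_shift m eps a)\<^sup>2) \<le> attack_cost K m eps"
  unfolding attack_cost_def mean_shift_def
  by (intro sum_mono sum_squares_ge_card_mean_square)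

lemma P2_feasible_cost_ge_hinge_cost:
  assumes "astar \<in> {1..K}" and "P2_feasible K astar \<sigma> T \<xi> m y eps"
  shows "hinge_cost (real (m astar)) (\<lambda>a. real (m a)) (P2_gap \<sigma> T \<xi> m y astar) ({1..K} - {astar})
           (mean_shift m eps astar) \<le> attack_cost K m eps"
proof -
  let ?d = "mean_shift m eps"
  have "(max 0 (P2_gap \<sigma> T \<xi> m y astar a - ?d astar))\<^sup>2 \<le> (?d a)\<^sup>2"
    if "a \<in> {1..K} - {astar}" for a
  proof -
    have "P2_gap \<sigma> T \<xi> m y astar a \<le> ?d astar - ?d a"
      using assms(2) that unfolding P2_feasible_iff_gap by blast
    then have "max 0 (P2_gap \<sigma> T \<xi> m y astar a - ?d astar) \<le> \<bar>?d a\<bar>"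
      by linarith
    then show ?thesis
      using power_mono[of _ "\<bar>?d a\<bar>" 2] by simp
  qed
  then have "hinge_cost (real (m astar)) (\<lambda>a. real (m a)) (P2_gap \<sigma> T \<xi> m y astar) ({1..K} - {astar})
               (?d astar) \<le> (\<Sum>a\<in>{1..K}. real (m a) * (?d a)\<^sup>2)"
    unfolding hinge_cost_def sum_split_arm[OF assms(1)]
    by (intro add_left_mono sum_mono mult_left_mono) auto
  then show ?thesis
    using attack_cost_ge_mean_shift[of m eps K] by linarith
qed

definition hinge_attack :: "real \<Rightarrow> nat \<Rightarrow> real \<Rightarrow> (nat \<Rightarrow> nat) \<Rightarrow> (nat \<Rightarrow> nat \<Rightarrow> real) \<Rightarrow> nat \<Rightarrow> real \<Rightarrow> nat \<Rightarrow> nat \<Rightarrow> real" where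
  "hinge_attack \<sigma> T \<xi> m y astar t a i =
     (if a = astar then t else - max 0 (P2_gap \<sigma> T \<xi> m y astar a - t))"

lemma mean_shift_hinge_attack:
  assumes "m a \<ge> 1"
  shows "mean_shift m (hinge_attack \<sigma> T \<xi> m y astar t) a = hinge_attack \<sigma> T \<xi> m y astar t a 0"
  using assms by (simp add: mean_shift_def hinge_attack_def)

lemma hinge_attack_feasible:
  assumes "astar \<in> {1..K}" and "\<forall>a\<in>{1..K}. m a \<ge> 1"
  shows "P2_feasible K astar \<sigma> T \<xi> m y (hinge_attack \<sigma> T \<xi> m y astar t)"
  unfolding P2_feasible_iff_gap using assms
  by (auto simp: mean_shift_hinge_attack hinge_attack_def)

lemma attack_cost_hinge_attack:
  assumes "astar \<in> {1..K}"
  shows "attack_cost K m (hinge_attack \<sigma> T \<xi> m y astar t) =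
           hinge_cost (real (m astar)) (\<lambda>a. real (m a)) (P2_gap \<sigma> T \<xi> m y astar) ({1..K} - {astar}) t"
  unfolding attack_cost_def hinge_cost_def sum_split_arm[OF assms]
  by (simp add: hinge_attack_def)

lemma P2_optimal_exists:
  assumes "astar \<in> {1..K}" and "\<forall>a\<in>{1..K}. m a \<ge> 1"
  shows "\<exists>eps. P2_optimal K astar \<sigma> T \<xi> m y eps"
proof -
  let ?g = "hinge_cost (real (m astar)) (\<lambda>a. real (m a)) (P2_gap \<sigma> T \<xi> m y astar) ({1..K} - {astar})"
  obtain t0 where t0: "\<And>t. ?g t0 \<le> ?g t"
    using hinge_cost_attains_min[of "{1..K} - {astar}" "real (m astar)" "\<lambda>a. real (m a)"] by auto
  have "attack_cost K m (hinge_attack \<sigma> T \<xi> m y astar t0) \<le> attack_cost K m eps"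
    if "P2_feasible K astar \<sigma> T \<xi> m y eps" for eps
    using t0[of "mean_shift m eps astar"] P2_feasible_cost_ge_hinge_cost[OF assms(1) that]
    unfolding attack_cost_hinge_attack[OF assms(1)] by linarith
  then show ?thesis
    unfolding P2_optimal_def using hinge_attack_feasible[OF assms] by blast
qed

lemma P2_feasible_imp_ucb_pulls:
  assumes "astar \<in> {1..K}" and "\<xi> > 0" and "P2_feasible K astar \<sigma> T \<xi> m y eps"
  shows "ucb_pulls K \<sigma> T m y eps astar"
proof -
  let ?u = "ucb_index \<sigma> T m y eps"
  have below: "?u a < ?u astar" if "a \<in> {1..K}" "a \<noteq> astar" for a
    using assms that unfolding P2_feasible_def by fastforce
  show ?thesis
    unfolding ucb_pulls_def
  proof (intro set_eqI iffI)
    fix b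
    assume "b \<in> {b \<in> {1..K}. \<forall>c\<in>{1..K}. ?u c \<le> ?u b}"
    then show "b \<in> {astar}"
      using below[of b] assms(1) by fastforce
  next
    fix b
    assume "b \<in> {astar}"
    then show "b \<in> {b \<in> {1..K}. \<forall>c\<in>{1..K}. ?u c \<le> ?u b}"
      using below assms(1) by fastforce
  qed
qed

theorem theorem2:
  fixes K astar T :: nat and \<sigma> \<xi> :: real
    and m :: "nat \<Rightarrow> nat" and y :: "nat \<Rightarrow> nat \<Rightarrow> real"
  assumes "astar \<in> {1..K}" and "T \<ge> 1" and "\<sigma> > 0" and "\<xi> > 0"
    and "\<forall>a\<in>{1..K}. m a \<ge> 1"
  shows "(\<forall>a\<in>{1..K}. \<exists>c. \<forall>eps. ucb_index \<sigma> T m y eps a = c + (\<Sum>i<m a. eps a i) / real (m a))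
         \<and> (\<exists>eps. P2_optimal K astar \<sigma> T \<xi> m y eps)
         \<and> (\<forall>eps. P2_optimal K astar \<sigma> T \<xi> m y eps \<longrightarrow> ucb_pulls K \<sigma> T m y eps astar)"
proof (intro conjI)
  show "\<forall>a\<in>{1..K}. \<exists>c. \<forall>eps. ucb_index \<sigma> T m y eps a = c + (\<Sum>i<m a. eps a i) / real (m a)"
    using ucb_index_eq_unpoisoned_plus_mean_shift unfolding mean_shift_def by blast
  show "\<exists>eps. P2_optimal K astar \<sigma> T \<xi> m y eps"
    using P2_optimal_exists[OF assms(1,5)] .
  show "\<forall>eps. P2_optimal K astar \<sigma> T \<xi> m y eps \<longrightarrow> ucb_pulls K \<sigma> T m y eps astar"
    using P2_feasible_imp_ucb_pulls[OF assms(1,4)] unfolding P2_optimal_def by blast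
qed

end
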